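(* Let $H_1$ and $H_2$ be finite-dimensional Hilbert spaces and let $G\in L(H_1,H_2)$ with $\|G\|=1$ be a relative spear operator. Then $G$ is a partial isometry.
   Context: For a norm-one $G\in L(X,Y)$ and $T\in L(X,Y)$ ($X,Y$ Banach spaces, $S_X$ the unit sphere): $\|T\|_G := \inf_{\delta>0}\sup\{\|Tx\|: x\in S_X,\ \|Gx\|>1-\delta\}$; $V_G(T):=\bigcap_{\delta>0}\overline{\{y^*(Tx): x\in S_X,\ y^*\in S_{Y^*},\ \operatorname{Re} y^*(Gx)>1-\delta\}}$ and $\nu_G(T):=\max\{|\lambda|:\lambda\in V_G(T)\}$. $G$ is called a relative spear operator if $\nu_G(T)=\|T\|_G$ for all $T\in L(X,Y)$. A partial isometry is an operator $G$ with $G^*G$ an orthogonal projection. *)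

theory Defs
  imports "HOL-Analysis.Analysis"
begin

definition rel_norm :: "('a::real_normed_vector \<Rightarrow> 'b::real_normed_vector) \<Rightarrow> ('a \<Rightarrow> 'b) \<Rightarrow> real" where
  "rel_norm G T = (INF \<delta>\<in>{0<..}. Sup {norm (T x) | x. norm x = 1 \<and> norm (G x) > 1 - \<delta>})"

definition dual_sphere_R :: "('b::real_normed_vector \<Rightarrow> real) set" where
  "dual_sphere_R = {f. bounded_linear f \<and> onorm f = 1}"

definition num_range_R :: "('a::real_normed_vector \<Rightarrow> 'b::real_normed_vector) \<Rightarrow> ('a \<Rightarrow> 'b) \<Rightarrow> real set" where
  "num_range_R G T = (\<Inter>\<delta>\<in>{0<..}. closure
     {f (T x) | x f. norm x = 1 \<and> f \<in> dual_sphere_R \<and> f (G x) > 1 - \<delta>})"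

definition num_radius_R :: "('a::real_normed_vector \<Rightarrow> 'b::real_normed_vector) \<Rightarrow> ('a \<Rightarrow> 'b) \<Rightarrow> real" where
  "num_radius_R G T = Sup (abs ` num_range_R G T)"

definition rel_spear_R :: "('a::real_normed_vector \<Rightarrow> 'b::real_normed_vector) \<Rightarrow> bool" where
  "rel_spear_R G \<longleftrightarrow> (\<forall>T. bounded_linear T \<longrightarrow> num_radius_R G T = rel_norm G T)"

definition orth_proj_R :: "('a::real_inner \<Rightarrow> 'a) \<Rightarrow> bool" where
  "orth_proj_R P \<longleftrightarrow> linear P \<and> P \<circ> P = P \<and> (\<forall>x y. inner (P x) y = inner x (P y))"

definition partial_isometry_R :: "('a::real_inner \<Rightarrow> 'b::real_inner) \<Rightarrow> bool" where
  "partial_isometry_R G \<longleftrightarrow> orth_proj_R (adjoint G \<circ> G)"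

section \<open>Complex finite-dimensional Hilbert spaces, modelled as complex^'n with the
  standard inner product (the vector norm on complex^'n is the Hilbert norm)\<close>

definition cinner :: "complex ^ 'n \<Rightarrow> complex ^ 'n \<Rightarrow> complex" where
  "cinner x y = (\<Sum>i\<in>UNIV. x $ i * cnj (y $ i))"

definition clinear_op :: "(complex ^ 'n \<Rightarrow> complex ^ 'm) \<Rightarrow> bool" where
  "clinear_op T \<longleftrightarrow> bounded_linear T \<and> (\<forall>c x. T (c *s x) = c *s T x)"

definition dual_sphere_C :: "(complex ^ 'm \<Rightarrow> complex) set" where
  "dual_sphere_C = {f. bounded_linear f \<and> (\<forall>c x. f (c *s x) = c * f x) \<and> onorm f = 1}"

definition num_range_C :: "(complex ^ 'n \<Rightarrow> complex ^ 'm) \<Rightarrow> (complex ^ 'n \<Rightarrow> complex ^ 'm) \<Rightarrow> complex set" where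
  "num_range_C G T = (\<Inter>\<delta>\<in>{0<..}. closure
     {f (T x) | x f. norm x = 1 \<and> f \<in> dual_sphere_C \<and> Re (f (G x)) > 1 - \<delta>})"

definition num_radius_C :: "(complex ^ 'n \<Rightarrow> complex ^ 'm) \<Rightarrow> (complex ^ 'n \<Rightarrow> complex ^ 'm) \<Rightarrow> real" where
  "num_radius_C G T = Sup (cmod ` num_range_C G T)"

definition rel_spear_C :: "(complex ^ 'n \<Rightarrow> complex ^ 'm) \<Rightarrow> bool" where
  "rel_spear_C G \<longleftrightarrow> (\<forall>T. clinear_op T \<longrightarrow> num_radius_C G T = rel_norm G T)"

definition cadjoint :: "(complex ^ 'n \<Rightarrow> complex ^ 'm) \<Rightarrow> complex ^ 'm \<Rightarrow> complex ^ 'n" where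
  "cadjoint G = (\<lambda>y. SOME z. \<forall>x. cinner (G x) y = cinner x z)"

definition orth_proj_C :: "(complex ^ 'n \<Rightarrow> complex ^ 'n) \<Rightarrow> bool" where
  "orth_proj_C P \<longleftrightarrow> clinear_op P \<and> P \<circ> P = P \<and> (\<forall>x y. cinner (P x) y = cinner x (P y))"

definition partial_isometry_C :: "(complex ^ 'n \<Rightarrow> complex ^ 'm) \<Rightarrow> bool" where
  "partial_isometry_C G \<longleftrightarrow> orth_proj_C (cadjoint G \<circ> G)"

end

theory Submission
  imports Defs
begin

(* Let G be a contraction of norm one, G* its adjoint and x0 a unit vector with |G x0| = 1
   (it exists in finite dimension). Suppose the defect w = G z - G G* G z is nonzero for some z,
   and let T be the rank-one operator T x = <x, x0> w. Its relative norm is at least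
   |T x0| = |w| > 0. But if |x| = 1 and a norm-one functional f almost norms G x, i.e.
   Re f (G x) > 1 - delta, then f is within sqrt (2 delta) of <-, G x>, while
   |<w, G x>| = |<x - G* G x, G* G z>| <= sqrt (1 - |G x|^2) |z| <= sqrt (2 delta) |z|.
   Hence V_G(T) = {0}, contradicting nu_G(T) = |T|_G. So G G* G = G, which makes G* G a
   self-adjoint idempotent. Complex spaces are treated as real Euclidean spaces, using
   Im f w = - Re f (i w) and the fact that i w is again a defect vector. *)

lemma norm_le_if_onorm_le_1:
  assumes "bounded_linear G" "onorm G \<le> 1"
  shows "norm (G v) \<le> norm v"
  using onorm[OF assms(1), of v] mult_right_mono[OF assms(2) norm_ge_zero, of v] by simp

lemma onorm_attained:
  fixes G :: "'a::euclidean_space \<Rightarrow> 'b::real_normed_vector"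
  assumes G: "bounded_linear G"
  obtains x where "norm x = 1" "norm (G x) = onorm G"
proof -
  have cont: "continuous_on (sphere 0 1) (\<lambda>x. norm (G x))"
    using G by (intro continuous_intros) (simp add: linear_continuous_on)
  obtain x where x: "x \<in> sphere 0 1" and max: "\<And>y. y \<in> sphere 0 1 \<Longrightarrow> norm (G y) \<le> norm (G x)"
    using continuous_attains_sup[OF compact_sphere _ cont] by auto
  have "onorm G \<le> norm (G x)"
  proof (rule onorm_le)
    fix y :: 'a
    show "norm (G y) \<le> norm (G x) * norm y"
    proof (cases "y = 0")
      case False
      have "norm (G (y /\<^sub>R norm y)) \<le> norm (G x)" using max False by simp
      then have "norm (G y) / norm y \<le> norm (G x)"
        using False G by (simp add: linear_simps divide_inverse mult.commute)
      then show ?thesis using False by (simp add: divide_le_eq mult.commute)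
    qed (use G in \<open>simp add: linear_simps\<close>)
  qed
  moreover have "norm (G x) \<le> onorm G" using onorm[OF G, of x] x by simp
  ultimately show thesis using that x by simp
qed

lemma norm_adjoint_le:
  fixes G :: "'a::euclidean_space \<Rightarrow> 'b::euclidean_space"
  assumes G: "linear G" and contr: "\<And>v. norm (G v) \<le> norm v"
  shows "norm (adjoint G y) \<le> norm y"
proof -
  have "norm (adjoint G y) ^ 2 = G (adjoint G y) \<bullet> y"
    by (simp add: power2_norm_eq_inner adjoint_clauses(1)[OF G])
  also have "\<dots> \<le> norm (G (adjoint G y)) * norm y" by (rule norm_cauchy_schwarz)
  also have "\<dots> \<le> norm (adjoint G y) * norm y" using contr by (simp add: mult_right_mono)
  finally have "norm (adjoint G y) * norm (adjoint G y) \<le> norm (adjoint G y) * norm y"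
    by (simp add: power2_eq_square)
  then show ?thesis
    by (cases "adjoint G y = 0") (simp_all add: mult_le_cancel_left_pos)
qed

lemma norm_sub_adjoint_le:
  fixes G :: "'a::euclidean_space \<Rightarrow> 'b::euclidean_space"
  assumes G: "linear G" and contr: "\<And>v. norm (G v) \<le> norm v"
  shows "norm (x - adjoint G (G x)) ^ 2 \<le> norm x ^ 2 - norm (G x) ^ 2"
proof -
  have "norm (x - adjoint G (G x)) ^ 2
      = norm x ^ 2 - 2 * norm (G x) ^ 2 + norm (adjoint G (G x)) ^ 2"
    by (simp add: power2_norm_eq_inner inner_diff_left inner_diff_right inner_commute
        adjoint_clauses(1)[OF G])
  also have "norm (adjoint G (G x)) ^ 2 \<le> norm (G x) ^ 2"
    using norm_adjoint_le[OF G contr] by (simp add: power_mono)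
  finally show ?thesis by simp
qed

lemma inner_defect_le:
  fixes G :: "'a::euclidean_space \<Rightarrow> 'b::euclidean_space"
  assumes G: "linear G" and contr: "\<And>v. norm (G v) \<le> norm v"
  shows "\<bar>G x \<bullet> (G z - G (adjoint G (G z)))\<bar> \<le> sqrt (norm x ^ 2 - norm (G x) ^ 2) * norm z"
proof -
  let ?H = "adjoint G"
  have "G x \<bullet> (G z - G (?H (G z))) = x \<bullet> ?H (G z) - ?H (G x) \<bullet> ?H (G z)"
    using adjoint_clauses(1)[OF G, of x "G z"] adjoint_clauses(2)[OF G, of "G x" "?H (G z)"]
    by (simp add: inner_diff_right)
  then have "\<bar>G x \<bullet> (G z - G (?H (G z)))\<bar> \<le> norm (x - ?H (G x)) * norm (?H (G z))"
    by (metis Cauchy_Schwarz_ineq2 inner_diff_left)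
  also have "\<dots> \<le> sqrt (norm x ^ 2 - norm (G x) ^ 2) * norm z"
  proof (rule mult_mono)
    show "norm (x - ?H (G x)) \<le> sqrt (norm x ^ 2 - norm (G x) ^ 2)"
      using norm_sub_adjoint_le[OF G contr] real_le_rsqrt by blast
    show "norm (?H (G z)) \<le> norm z"
      using norm_adjoint_le[OF G contr, of "G z"] contr[of z] by linarith
  qed (simp_all add: contr)
  finally show ?thesis .
qed

text \<open>The Riesz representative \<open>r = adjoint g 1\<close> of \<open>g\<close> has \<open>\<parallel>r\<parallel> \<le> 1\<close>, so
  \<open>\<parallel>r - u\<parallel>\<^sup>2 \<le> 2 - 2 g u < 2 \<delta>\<close>.\<close>

lemma abs_functional_le_inner_if_almost_norming:
  fixes g :: "'b::euclidean_space \<Rightarrow> real"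
  assumes g: "linear g" and g_le: "\<And>y. \<bar>g y\<bar> \<le> norm y"
    and u: "norm u \<le> 1" and gu: "g u > 1 - \<delta>"
  shows "\<bar>g v\<bar> \<le> \<bar>v \<bullet> u\<bar> + norm v * sqrt (2 * \<delta>)"
proof -
  define r where "r = adjoint g 1"
  have g_eq: "g y = y \<bullet> r" for y
    using adjoint_clauses(1)[OF g, of y 1] by (simp add: r_def)
  have "norm r ^ 2 \<le> norm r"
    using g_le[of r] by (simp add: g_eq power2_norm_eq_inner)
  then have "norm r \<le> 1"
    by (cases "r = 0") (simp_all add: power2_eq_square mult_le_cancel_left1)
  then have "norm r ^ 2 \<le> 1" by (simp add: power_le_one)
  moreover have "norm u ^ 2 \<le> 1" using u by (simp add: power_le_one)
  ultimately have "norm (r - u) ^ 2 \<le> 2 * \<delta>"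
    using gu by (simp add: g_eq power2_norm_eq_inner inner_diff_left inner_diff_right inner_commute)
  then have ru: "norm (r - u) \<le> sqrt (2 * \<delta>)" using real_le_rsqrt by blast
  have "\<bar>g v\<bar> = \<bar>v \<bullet> u + v \<bullet> (r - u)\<bar>" by (simp add: g_eq inner_diff_right)
  also have "\<dots> \<le> \<bar>v \<bullet> u\<bar> + \<bar>v \<bullet> (r - u)\<bar>" by (rule abs_triangle_ineq)
  also have "\<bar>v \<bullet> (r - u)\<bar> \<le> norm v * norm (r - u)" by (rule Cauchy_Schwarz_ineq2)
  also have "\<dots> \<le> norm v * sqrt (2 * \<delta>)" using ru by (simp add: mult_left_mono)
  finally show ?thesis by simp
qed

lemma functional_defect_le:
  fixes G :: "'a::euclidean_space \<Rightarrow> 'b::euclidean_space"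
  assumes G: "linear G" and contr: "\<And>v. norm (G v) \<le> norm v"
    and g: "linear g" and g_le: "\<And>y. \<bar>g y\<bar> \<le> norm y"
    and x: "norm x = 1" and gGx: "g (G x) > 1 - \<delta>"
  shows "\<bar>g (G z - G (adjoint G (G z)))\<bar>
    \<le> sqrt (2 * \<delta>) * (norm z + norm (G z - G (adjoint G (G z))))"
proof -
  define w where "w = G z - G (adjoint G (G z))"
  have Gx: "norm (G x) \<le> 1" using contr[of x] x by simp
  have "1 - norm (G x) < \<delta>"
    using abs_ge_self[of "g (G x)"] g_le[of "G x"] gGx by linarith
  then have "1 - norm (G x) ^ 2 \<le> 2 * \<delta>"
    using zero_le_square[of "1 - norm (G x)"] by (simp add: power2_eq_square algebra_simps)
  then have "sqrt (norm x ^ 2 - norm (G x) ^ 2) * norm z \<le> sqrt (2 * \<delta>) * norm z"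
    using x by (intro mult_right_mono) simp_all
  moreover have "\<bar>G x \<bullet> w\<bar> \<le> sqrt (norm x ^ 2 - norm (G x) ^ 2) * norm z"
    unfolding w_def by (rule inner_defect_le[OF G contr])
  moreover have "\<bar>g w\<bar> \<le> \<bar>w \<bullet> G x\<bar> + norm w * sqrt (2 * \<delta>)"
    by (rule abs_functional_le_inner_if_almost_norming[OF g g_le Gx gGx])
  ultimately have "\<bar>g w\<bar> \<le> sqrt (2 * \<delta>) * (norm z + norm w)"
    by (simp add: inner_commute algebra_simps)
  then show ?thesis by (simp only: w_def)
qed

lemma norm_le_rel_norm:
  assumes T: "bounded_linear T" and x: "norm x = 1" "norm (G x) = 1"
  shows "norm (T x) \<le> rel_norm G T"
  unfolding rel_norm_def
proof (rule cINF_greatest)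
  fix \<delta> :: real assume "\<delta> \<in> {0<..}"
  have "norm (T y) \<le> onorm T" if "norm y = 1" for y
    using onorm[OF T, of y] that by simp
  then have "bdd_above {norm (T x) | x. norm x = 1 \<and> norm (G x) > 1 - \<delta>}"
    by (intro bdd_aboveI[of _ "onorm T"]) auto
  with \<open>\<delta> \<in> {0<..}\<close> show "norm (T x) \<le> Sup {norm (T x) | x. norm x = 1 \<and> norm (G x) > 1 - \<delta>}"
    using x by (intro cSup_upper) auto
qed simp

lemma Inter_closure_eq_zero_if_shrinking:
  fixes S :: "real \<Rightarrow> 'a::real_normed_vector set"
  assumes zero: "\<And>\<delta>. \<delta> > 0 \<Longrightarrow> 0 \<in> S \<delta>"
    and small: "\<And>\<delta> v. \<delta> > 0 \<Longrightarrow> v \<in> S \<delta> \<Longrightarrow> norm v \<le> c \<delta>"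
    and c: "(c \<longlongrightarrow> 0) (at_right 0)"
  shows "(\<Inter>\<delta>\<in>{0<..}. closure (S \<delta>)) = {0}"
proof -
  have "v = 0" if v: "\<And>\<delta>. \<delta> > 0 \<Longrightarrow> v \<in> closure (S \<delta>)" for v
  proof -
    have bound: "norm v \<le> c \<delta>" if "\<delta> > 0" for \<delta>
    proof -
      have "closure (S \<delta>) \<subseteq> cball 0 (c \<delta>)"
        using small[OF that] by (intro closure_minimal) auto
      then show ?thesis using v[OF that] by auto
    qed
    have "\<forall>\<^sub>F \<delta> in at_right 0. norm v \<le> c \<delta>"
      using eventually_at_right_less by (rule eventually_mono) (rule bound)
    then have "norm v \<le> 0" by (rule tendsto_lowerbound[OF c]) simp
    then show "v = 0" by simp
  qed
  moreover have "0 \<in> closure (S \<delta>)" if "\<delta> > 0" for \<delta>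
    using zero[OF that] closure_subset by blast
  ultimately show ?thesis by blast
qed

lemma tendsto_sqrt_mult_at_right_0: "((\<lambda>\<delta>. sqrt (2 * \<delta>) * K) \<longlongrightarrow> 0) (at_right 0)"
proof -
  have "((\<lambda>\<delta>::real. sqrt (2 * \<delta>)) \<longlongrightarrow> sqrt (2 * 0)) (at_right 0)"
    by (intro tendsto_real_sqrt tendsto_mult_left tendsto_ident_at)
  then show ?thesis by (intro tendsto_mult_left_zero) simp
qed

lemma inner_left_in_dual_sphere_R:
  fixes u :: "'b::euclidean_space"
  assumes u: "norm u = 1"
  shows "(\<lambda>y. y \<bullet> u) \<in> dual_sphere_R"
proof -
  have bl: "bounded_linear (\<lambda>y. y \<bullet> u)" by (rule bounded_linear_inner_left)
  have "onorm (\<lambda>y. y \<bullet> u) \<le> 1"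
    using onorm_inner_left[OF bounded_linear_ident, of u] u by (simp add: onorm_id)
  moreover have "norm (u \<bullet> u) / norm u \<le> onorm (\<lambda>y. y \<bullet> u)" by (rule le_onorm[OF bl])
  ultimately show ?thesis
    using bl u by (auto simp: dual_sphere_R_def power2_norm_eq_inner[symmetric])
qed

lemma num_range_R_rank_one_defect:
  fixes G :: "'a::euclidean_space \<Rightarrow> 'b::euclidean_space"
  assumes G: "linear G" and contr: "\<And>v. norm (G v) \<le> norm v"
    and x0: "norm x0 = 1" "norm (G x0) = 1"
  fixes z :: 'a
  defines "w \<equiv> G z - G (adjoint G (G z))"
  shows "num_range_R G (\<lambda>x. (x \<bullet> x0) *\<^sub>R w) = {0}"
  unfolding num_range_R_def
proof (rule Inter_closure_eq_zero_if_shrinking[OF _ _ tendsto_sqrt_mult_at_right_0])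
  fix \<delta> :: real assume "\<delta> > 0"
  have "w \<bullet> G x0 = 0"
    using inner_defect_le[OF G contr, of x0 z] x0 by (simp add: w_def inner_commute)
  then show "0 \<in> {f ((x \<bullet> x0) *\<^sub>R w) | x f. norm x = 1 \<and> f \<in> dual_sphere_R \<and> f (G x) > 1 - \<delta>}"
    using x0 \<open>\<delta> > 0\<close> inner_left_in_dual_sphere_R[of "G x0"]
    by (intro CollectI exI[of _ x0] exI[of _ "\<lambda>y. y \<bullet> G x0"])
      (simp add: power2_norm_eq_inner[symmetric])
next
  fix \<delta> :: real and v
  assume "v \<in> {f ((x \<bullet> x0) *\<^sub>R w) | x f. norm x = 1 \<and> f \<in> dual_sphere_R \<and> f (G x) > 1 - \<delta>}"
  then obtain x f where v: "v = f ((x \<bullet> x0) *\<^sub>R w)" and x: "norm x = 1"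
    and f: "bounded_linear f" "onorm f = 1" and fGx: "f (G x) > 1 - \<delta>"
    by (auto simp: dual_sphere_R_def)
  have f_le: "\<bar>f y\<bar> \<le> norm y" for y using onorm[OF f(1), of y] f(2) by simp
  have "\<bar>x \<bullet> x0\<bar> \<le> 1" using Cauchy_Schwarz_ineq2[of x x0] x x0 by simp
  moreover have "\<bar>f w\<bar> \<le> sqrt (2 * \<delta>) * (norm z + norm w)"
    unfolding w_def
    by (rule functional_defect_le[OF G contr bounded_linear.linear[OF f(1)] f_le x fGx])
  ultimately have "\<bar>x \<bullet> x0\<bar> * \<bar>f w\<bar> \<le> 1 * (sqrt (2 * \<delta>) * (norm z + norm w))"
    by (intro mult_mono) auto
  then show "norm v \<le> sqrt (2 * \<delta>) * (norm z + norm w)"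
    by (simp add: v linear_scale[OF bounded_linear.linear[OF f(1)]] abs_mult)
qed

lemma G_adjoint_G_eq_if_rel_spear_R:
  fixes G :: "'a::euclidean_space \<Rightarrow> 'b::euclidean_space"
  assumes G: "bounded_linear G" "onorm G = 1" and spear: "rel_spear_R G"
  shows "G (adjoint G (G z)) = G z"
proof (rule ccontr)
  define w where "w = G z - G (adjoint G (G z))"
  assume "G (adjoint G (G z)) \<noteq> G z"
  then have "w \<noteq> 0" by (simp add: w_def)
  have lin: "linear G" using G(1) bounded_linear.linear by blast
  have contr: "norm (G v) \<le> norm v" for v using norm_le_if_onorm_le_1[OF G(1)] G(2) by simp
  obtain x0 where x0: "norm x0 = 1" "norm (G x0) = 1" using onorm_attained[OF G(1)] G(2) by metis
  define T where "T = (\<lambda>x. (x \<bullet> x0) *\<^sub>R w)"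
  have T: "bounded_linear T"
    unfolding T_def by (intro bounded_linear_scaleR_left[THEN bounded_linear_compose]
        bounded_linear_inner_left)
  have "norm w \<le> rel_norm G T"
    using norm_le_rel_norm[where G=G, OF T x0] x0 by (simp add: T_def power2_norm_eq_inner[symmetric])
  also have "\<dots> = num_radius_R G T" using spear T by (simp add: rel_spear_R_def)
  also have "\<dots> = 0"
    using num_range_R_rank_one_defect[OF lin contr x0] by (simp add: num_radius_R_def T_def w_def)
  finally show False using \<open>w \<noteq> 0\<close> by simp
qed

lemma partial_isometry_R_if_G_adjoint_G_eq:
  fixes G :: "'a::euclidean_space \<Rightarrow> 'b::euclidean_space"
  assumes G: "linear G" and GHG: "\<And>z. G (adjoint G (G z)) = G z"
  shows "partial_isometry_R G"
  unfolding partial_isometry_R_def orth_proj_R_def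
proof (intro conjI allI)
  show "linear (adjoint G \<circ> G)" using adjoint_linear[OF G] G by (simp add: linear_compose)
  show "(adjoint G \<circ> G) \<circ> (adjoint G \<circ> G) = adjoint G \<circ> G" by (simp add: fun_eq_iff GHG)
  show "(adjoint G \<circ> G) x \<bullet> y = x \<bullet> (adjoint G \<circ> G) y" for x y
    by (simp add: adjoint_clauses[OF G])
qed

lemma Re_cinner: "Re (cinner x y) = x \<bullet> y"
  by (simp add: cinner_def inner_vec_def inner_complex_def Re_sum)

lemma Im_cinner: "Im (cinner x y) = - ((\<i> *s x) \<bullet> y)"
  by (simp add: cinner_def inner_vec_def inner_complex_def Im_sum sum_negf[symmetric] algebra_simps)

lemma cinner_eq_Complex: "cinner x y = Complex (x \<bullet> y) (- ((\<i> *s x) \<bullet> y))"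
  by (simp add: complex_eq_iff Re_cinner Im_cinner)

lemma cinner_add_left: "cinner (x + y) z = cinner x z + cinner y z"
  by (simp add: cinner_def distrib_right sum.distrib)

lemma cinner_smult_left: "cinner (c *s x) z = c * cinner x z"
  by (simp add: cinner_def sum_distrib_left mult.assoc)

lemma vector_scaleR_component_complex: "(r *\<^sub>R (x :: complex ^ 'n)) $ i = of_real r * x $ i"
  by (simp only: vector_scaleR_component) (simp add: scaleR_conv_of_real)

lemma cinner_scaleR_left: "cinner (r *\<^sub>R x) z = of_real r * cinner x z"
  by (simp add: cinner_def sum_distrib_left mult.assoc, simp add: scaleR_conv_of_real)

lemma cinner_self: "cinner x x = of_real (norm x ^ 2)"
proof -
  have "(\<i> *s x) \<bullet> x = 0" by (simp add: inner_vec_def inner_complex_def algebra_simps)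
  then show ?thesis by (simp add: complex_eq_iff Re_cinner Im_cinner power2_norm_eq_inner)
qed

lemma inner_smult_right: "(x :: complex ^ 'n) \<bullet> (c *s y) = (cnj c *s x) \<bullet> y"
  by (simp add: inner_vec_def inner_complex_def algebra_simps)

lemma norm_smult_vec: "norm (c *s (x :: complex ^ 'n)) = cmod c * norm x"
  by (simp add: norm_vec_def norm_mult L2_set_right_distrib)

lemma norm_cinner_le: "cmod (cinner x y) \<le> norm x * norm y"
proof (cases "cinner x y = 0")
  case False
  define c where "c = cnj (cinner x y) / cmod (cinner x y)"
  have "cnj (cinner x y) * cinner x y = of_real (cmod (cinner x y) ^ 2)"
    by (metis complex_norm_square mult.commute of_real_power)
  then have "cmod (cinner x y) = Re (c * cinner x y)"
    using False by (simp add: c_def power2_eq_square)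
  also have "\<dots> = (c *s x) \<bullet> y" by (simp only: cinner_smult_left[symmetric] Re_cinner)
  also have "\<dots> \<le> norm (c *s x) * norm y" by (rule norm_cauchy_schwarz)
  also have "\<dots> = norm x * norm y" using False by (simp add: c_def norm_smult_vec norm_divide)
  finally show ?thesis .
qed simp

lemma bounded_linear_cinner_left: "bounded_linear (\<lambda>x. cinner x y)"
  by (intro linear_conv_bounded_linear[THEN iffD1] linearI)
    (simp_all add: cinner_add_left cinner_scaleR_left, simp add: scaleR_conv_of_real)

lemma bounded_linear_cinner_left_smult: "bounded_linear (\<lambda>x. cinner x y *s w)"
  by (intro linear_conv_bounded_linear[THEN iffD1] linearI)
    (simp_all add: cinner_add_left cinner_scaleR_left vec_eq_iff algebra_simps
      vector_scaleR_component_complex, simp add: scaleR_conv_of_real)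

lemma adjoint_smult:
  fixes G :: "complex ^ 'n \<Rightarrow> complex ^ 'm"
  assumes G: "linear G" and hom: "\<And>c x. G (c *s x) = c *s G x"
  shows "adjoint G (c *s y) = c *s adjoint G y"
proof -
  have "x \<bullet> adjoint G (c *s y) = x \<bullet> (c *s adjoint G y)" for x
  proof -
    have "x \<bullet> adjoint G (c *s y) = (cnj c *s G x) \<bullet> y"
      by (simp add: adjoint_clauses(1)[OF G] inner_smult_right)
    also have "\<dots> = (cnj c *s x) \<bullet> adjoint G y"
      by (simp add: adjoint_clauses(1)[OF G] hom[symmetric])
    finally show ?thesis by (simp add: inner_smult_right)
  qed
  then show ?thesis using vector_eq_ldot by blast
qed

lemma smult_defect:
  fixes G :: "complex ^ 'n \<Rightarrow> complex ^ 'm"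
  assumes G: "linear G" and hom: "\<And>c x. G (c *s x) = c *s G x"
  shows "c *s (G z - G (adjoint G (G z))) = G (c *s z) - G (adjoint G (G (c *s z)))"
  by (simp add: hom adjoint_smult[OF G hom] vec_eq_iff algebra_simps)

lemma cadjoint_eq_adjoint:
  fixes G :: "complex ^ 'n \<Rightarrow> complex ^ 'm"
  assumes G: "linear G" and hom: "\<And>c x. G (c *s x) = c *s G x"
  shows "cadjoint G = adjoint G"
proof
  fix y
  have adj: "\<forall>x. cinner (G x) y = cinner x (adjoint G y)"
    using adjoint_clauses(1)[OF G] by (simp add: cinner_eq_Complex hom[symmetric])
  show "cadjoint G y = adjoint G y"
    unfolding cadjoint_def
  proof (rule some_equality)
    fix z assume "\<forall>x. cinner (G x) y = cinner x z"
    then have "\<forall>x. x \<bullet> z = x \<bullet> adjoint G y" using adj by (metis Re_cinner)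
    then show "z = adjoint G y" using vector_eq_ldot by blast
  qed (rule adj)
qed

lemma cinner_left_in_dual_sphere_C:
  assumes u: "norm u = 1"
  shows "(\<lambda>y. cinner y u) \<in> dual_sphere_C"
proof -
  have bl: "bounded_linear (\<lambda>y. cinner y u)" by (rule bounded_linear_cinner_left)
  have "onorm (\<lambda>y. cinner y u) \<le> 1"
  proof (rule onorm_le)
    show "norm (cinner y u) \<le> 1 * norm y" for y using norm_cinner_le[of y u] u by simp
  qed
  moreover have "norm (cinner u u) / norm u \<le> onorm (\<lambda>y. cinner y u)" by (rule le_onorm[OF bl])
  ultimately show ?thesis
    using bl u by (auto simp: dual_sphere_C_def cinner_self cinner_smult_left)
qed

lemma num_range_C_rank_one_defect:
  fixes G :: "complex ^ 'n \<Rightarrow> complex ^ 'm"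
  assumes G: "linear G" and hom: "\<And>c x. G (c *s x) = c *s G x"
    and contr: "\<And>v. norm (G v) \<le> norm v"
    and x0: "norm x0 = 1" "norm (G x0) = 1"
  fixes z :: "complex ^ 'n"
  defines "w \<equiv> G z - G (adjoint G (G z))"
  shows "num_range_C G (\<lambda>x. cinner x x0 *s w) = {0}"
  unfolding num_range_C_def
proof (rule Inter_closure_eq_zero_if_shrinking[OF _ _ tendsto_sqrt_mult_at_right_0])
  fix \<delta> :: real assume "\<delta> > 0"
  have iw: "\<i> *s w = G (\<i> *s z) - G (adjoint G (G (\<i> *s z)))"
    unfolding w_def by (rule smult_defect[OF G hom])
  have "G x0 \<bullet> w = 0"
    using inner_defect_le[OF G contr, of x0 z] x0 by (simp add: w_def)
  moreover have "G x0 \<bullet> (\<i> *s w) = 0"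
    using inner_defect_le[OF G contr, of x0 "\<i> *s z"] x0 by (simp add: iw)
  ultimately have "cinner w (G x0) = 0"
    by (simp add: cinner_eq_Complex Complex_eq_0 inner_commute)
  then show "0 \<in> {f (cinner x x0 *s w) | x f. norm x = 1 \<and> f \<in> dual_sphere_C \<and> Re (f (G x)) > 1 - \<delta>}"
    using x0 \<open>\<delta> > 0\<close> cinner_left_in_dual_sphere_C[of "G x0"]
    by (intro CollectI exI[of _ x0] exI[of _ "\<lambda>y. cinner y (G x0)"])
      (simp add: cinner_self cinner_smult_left)
next
  fix \<delta> :: real and v
  assume "v \<in> {f (cinner x x0 *s w) | x f. norm x = 1 \<and> f \<in> dual_sphere_C \<and> Re (f (G x)) > 1 - \<delta>}"
  then obtain x f where v: "v = f (cinner x x0 *s w)" and x: "norm x = 1"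
    and f: "bounded_linear f" "onorm f = 1" and hom_f: "\<And>c y. f (c *s y) = c * f y"
    and fGx: "Re (f (G x)) > 1 - \<delta>"
    by (auto simp: dual_sphere_C_def)
  have Re_f: "linear (\<lambda>y. Re (f y))"
    using bounded_linear_compose[OF bounded_linear_Re f(1)] bounded_linear.linear by blast
  have Re_f_le: "\<bar>Re (f y)\<bar> \<le> norm y" for y
    using onorm[OF f(1), of y] f(2) abs_Re_le_cmod[of "f y"] by simp
  have iw: "\<i> *s w = G (\<i> *s z) - G (adjoint G (G (\<i> *s z)))"
    unfolding w_def by (rule smult_defect[OF G hom])
  have "\<bar>Re (f w)\<bar> \<le> sqrt (2 * \<delta>) * (norm z + norm w)"
    unfolding w_def by (rule functional_defect_le[OF G contr Re_f Re_f_le x fGx])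
  moreover have "\<bar>Re (f (\<i> *s w))\<bar> \<le> sqrt (2 * \<delta>) * (norm z + norm w)"
    using functional_defect_le[OF G contr Re_f Re_f_le x fGx, of "\<i> *s z"]
    by (simp add: iw[symmetric] norm_smult_vec)
  moreover have "cmod (f w) \<le> \<bar>Re (f w)\<bar> + \<bar>Re (f (\<i> *s w))\<bar>"
    using cmod_le[of "f w"] by (simp add: hom_f)
  ultimately have "cmod (f w) \<le> 2 * (sqrt (2 * \<delta>) * (norm z + norm w))" by linarith
  then have fw: "cmod (f w) \<le> sqrt (2 * \<delta>) * (2 * (norm z + norm w))"
    by (simp only: mult.left_commute[of 2])
  have "cmod (cinner x x0) \<le> 1" using norm_cinner_le[of x x0] x x0 by simp
  then have "cmod (cinner x x0) * cmod (f w) \<le> 1 * (sqrt (2 * \<delta>) * (2 * (norm z + norm w)))"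
    using fw by (intro mult_mono) auto
  then show "norm v \<le> sqrt (2 * \<delta>) * (2 * (norm z + norm w))"
    by (simp add: v hom_f norm_mult)
qed

lemma G_adjoint_G_eq_if_rel_spear_C:
  fixes G :: "complex ^ 'n \<Rightarrow> complex ^ 'm"
  assumes G: "clinear_op G" "onorm G = 1" and spear: "rel_spear_C G"
  shows "G (adjoint G (G z)) = G z"
proof (rule ccontr)
  define w where "w = G z - G (adjoint G (G z))"
  assume "G (adjoint G (G z)) \<noteq> G z"
  then have "w \<noteq> 0" by (simp add: w_def)
  have bl: "bounded_linear G" and hom: "\<And>c x. G (c *s x) = c *s G x"
    using G(1) by (auto simp: clinear_op_def)
  have lin: "linear G" using bl bounded_linear.linear by blast
  have contr: "norm (G v) \<le> norm v" for v using norm_le_if_onorm_le_1[OF bl] G(2) by simp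
  obtain x0 where x0: "norm x0 = 1" "norm (G x0) = 1" using onorm_attained[OF bl] G(2) by metis
  define T where "T = (\<lambda>x. cinner x x0 *s w)"
  have T: "bounded_linear T" unfolding T_def by (rule bounded_linear_cinner_left_smult)
  have "clinear_op T"
    using T by (simp add: clinear_op_def T_def cinner_smult_left vec_eq_iff)
  have "norm w \<le> rel_norm G T"
    using norm_le_rel_norm[where G=G, OF T x0] x0 by (simp add: T_def cinner_self vec_eq_iff)
  also have "\<dots> = num_radius_C G T" using spear \<open>clinear_op T\<close> by (simp add: rel_spear_C_def)
  also have "\<dots> = 0"
    using num_range_C_rank_one_defect[OF lin hom contr x0] by (simp add: num_radius_C_def T_def w_def)
  finally show False using \<open>w \<noteq> 0\<close> by simp
qed

lemma partial_isometry_C_if_G_adjoint_G_eq: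
  fixes G :: "complex ^ 'n \<Rightarrow> complex ^ 'm"
  assumes G: "clinear_op G" and GHG: "\<And>z. G (adjoint G (G z)) = G z"
  shows "partial_isometry_C G"
proof -
  have lin: "linear G" and hom: "\<And>c x. G (c *s x) = c *s G x"
    using G by (auto simp: clinear_op_def bounded_linear.linear)
  have hom_H: "adjoint G (c *s y) = c *s adjoint G y" for c y by (rule adjoint_smult[OF lin hom])
  have "linear (adjoint G \<circ> G)" using adjoint_linear[OF lin] lin by (simp add: linear_compose)
  then have "clinear_op (adjoint G \<circ> G)"
    by (simp add: clinear_op_def linear_conv_bounded_linear hom hom_H)
  moreover have "(adjoint G \<circ> G) \<circ> (adjoint G \<circ> G) = adjoint G \<circ> G" by (simp add: fun_eq_iff GHG)
  moreover have "cinner ((adjoint G \<circ> G) x) y = cinner x ((adjoint G \<circ> G) y)" for x y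
    using adjoint_clauses[OF lin] by (simp add: cinner_eq_Complex hom[symmetric] hom_H[symmetric])
  ultimately show ?thesis
    unfolding partial_isometry_C_def orth_proj_C_def cadjoint_eq_adjoint[OF lin hom] by blast
qed

theorem theorem3p12:
  shows "(\<forall>G :: 'a::euclidean_space \<Rightarrow> 'b::euclidean_space.
            bounded_linear G \<and> onorm G = 1 \<and> rel_spear_R G \<longrightarrow> partial_isometry_R G)
       \<and> (\<forall>G :: complex ^ 'n \<Rightarrow> complex ^ 'm.
            clinear_op G \<and> onorm G = 1 \<and> rel_spear_C G \<longrightarrow> partial_isometry_C G)"
  using partial_isometry_R_if_G_adjoint_G_eq G_adjoint_G_eq_if_rel_spear_R
    partial_isometry_C_if_G_adjoint_G_eq G_adjoint_G_eq_if_rel_spear_C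
  by (metis bounded_linear.linear)

end
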